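(* Let $p>\tfrac12$, $d_\pm\in\mathbb R$, and $d_k=d_+k^{-p}$ for $k>0$, $d_k=d_-|k|^{-p}$ for $k<0$, $d_0=0$. Let $\mathfrak D(x)=\sum_{k\in\mathbb Z}d_k e^{\mathrm i kx}$ (a $2\pi$-periodic distribution). Let $h_0\in C^\infty_c(\mathbb R)$ with $h_0=1$ on $[-\pi,\pi]$ and $\operatorname{supp}h_0\subset[-\tfrac{3\pi}{2},\tfrac{3\pi}{2}]$. Let $\zeta\in C^\infty(\mathbb R)$ vanish in a neighbourhood of $0$ and equal $1$ in a neighbourhood of infinity, let $\delta(\xi)=d_+\xi^{-p}$ for $\xi>0$, $\delta(\xi)=d_-|\xi|^{-p}$ for $\xi<0$, and let $\mathfrak F$ be the tempered distribution with $\widehat{\mathfrak F}=\zeta\delta$. Then the function $\mathfrak D_1=\mathfrak D\,h_0-\mathfrak F$ satisfies \[ \widehat{\mathfrak D_1}(\xi)=o(|\xi|^{-p}),\qquad |\xi|\to\infty. \]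
   Context: The Fourier transform is normalized as $\widehat f(\xi)=\frac1{2\pi}\int_{\mathbb R}f(x)e^{-\mathrm i x\xi}\,dx$ (extended to tempered distributions), so that $\widehat{\mathfrak D h_0}(\xi)=\sum_{k}d_k\widehat{h_0}(\xi-k)$. *)

theory Defs
  imports "HOL-Analysis.Analysis" "HOL-Library.Landau_Symbols"
begin

definition smooth :: "(real \<Rightarrow> real) \<Rightarrow> bool" where
  "smooth f \<longleftrightarrow> (\<forall>n x. ((deriv ^^ n) f) differentiable (at x))"

definition fourier :: "(real \<Rightarrow> real) \<Rightarrow> real \<Rightarrow> complex" where
  "fourier f \<xi> = (1 / (2 * complex_of_real pi)) *
      integral UNIV (\<lambda>x. complex_of_real (f x) * exp (- \<i> * complex_of_real (x * \<xi>)))"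

definition dcoef :: "real \<Rightarrow> real \<Rightarrow> real \<Rightarrow> int \<Rightarrow> real" where
  "dcoef p dp dm k = (if k > 0 then dp * (real_of_int k) powr (- p)
                      else if k < 0 then dm * \<bar>real_of_int k\<bar> powr (- p) else 0)"

text \<open>The symbol delta(xi) (value at 0 irrelevant since zeta vanishes near 0).\<close>
definition delta_sym :: "real \<Rightarrow> real \<Rightarrow> real \<Rightarrow> real \<Rightarrow> real" where
  "delta_sym p dp dm \<xi> = (if \<xi> > 0 then dp * \<xi> powr (- p)
                      else if \<xi> < 0 then dm * \<bar>\<xi>\<bar> powr (- p) else 0)"

text \<open>Fourier transform of D1 = D h0 - F:
  hat(D h0)(xi) = sum_k d_k hat(h0)(xi - k), and hat F = zeta * delta.\<close>
definition D1_hat :: "real \<Rightarrow> real \<Rightarrow> real \<Rightarrow> (real \<Rightarrow> real) \<Rightarrow> (real \<Rightarrow> real) \<Rightarrow> real \<Rightarrow> complex" where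
  "D1_hat p dp dm h0 \<zeta> \<xi> =
     (\<Sum>\<^sub>\<infinity>k::int. complex_of_real (dcoef p dp dm k) * fourier h0 (\<xi> - real_of_int k))
     - complex_of_real (\<zeta> \<xi> * delta_sym p dp dm \<xi>)"

end

theory Submission
  imports Defs "HOL-Complex_Analysis.Complex_Analysis"
begin

text \<open>
  Since h0 = 1 on [-pi, pi] and h0 vanishes outside (-2 pi, 2 pi), Poisson summation gives
  sum_k hat(h0)(xi - k) = 1 for every xi. Hence, wherever zeta(xi) = 1, the transform of D1 equals
  sum_k (d_k - delta(xi)) hat(h0)(xi - k). For |k - xi| <= |xi|/2 the mean value theorem gives
  |d_k - delta(xi)| <= const * |xi|^(-p-1) * |k - xi|, the extra factor |k - xi| being absorbed by
  the decay of hat(h0); for the other k the rapid decay of hat(h0)(xi - k) alone is O(|xi|^(-p-1)).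
  Summing over k, the transform of D1 is O(|xi|^(-p-1)) = o(|xi|^(-p)).

  Poisson summation is proved by pairing h0(x) exp(-i xi x) with the Dirichlet kernel D_N:
  because D_N(x) (exp(i x) - 1) = exp(i (N+1) x) - exp(-i N x), every part of the integral whose
  integrand is (exp(i x) - 1) times a C^1 function tends to 0 by the Riemann--Lebesgue lemma,
  and what remains is the integral of D_N over [-pi, pi], which is 2 pi.
\<close>

section \<open>Sums over the integers\<close>

lemma summable_on_inverse_square_int:
  "(\<lambda>k::int. 1 / (1 + \<bar>real_of_int k\<bar>)^2) summable_on UNIV"
proof -
  have "summable (\<lambda>n::nat. 1 / (1 + real n)^2)"
    using summable_ignore_initial_segment[OF inverse_power_summable[of 2], of 1]
    by (simp add: inverse_eq_divide add.commute)
  then have nat: "(\<lambda>n::nat. 1 / (1 + real n)^2) summable_on UNIV"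
    by (subst summable_on_UNIV_nonneg_real_iff) auto
  have "(\<lambda>k::int. 1 / (1 + \<bar>real_of_int k\<bar>)^2) summable_on range int"
    by (subst summable_on_reindex) (auto simp: o_def nat)
  moreover have "(\<lambda>k::int. 1 / (1 + \<bar>real_of_int k\<bar>)^2) summable_on range (\<lambda>n. - int n)"
    by (subst summable_on_reindex) (auto simp: inj_on_def o_def nat)
  ultimately have "(\<lambda>k::int. 1 / (1 + \<bar>real_of_int k\<bar>)^2) summable_on (range int \<union> range (\<lambda>n. - int n))"
    by (rule summable_on_union)
  moreover have "range int \<union> range (\<lambda>n. - int n) = UNIV"
    by (auto intro: int_cases2)
  ultimately show ?thesis
    by simp
qed

lemma inverse_square_shift_le:
  "1 / (1 + \<bar>\<xi> - real_of_int k\<bar>)^2 \<le> 4 / (1 + \<bar>real_of_int (k - \<lfloor>\<xi>\<rfloor>)\<bar>)^2"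
proof -
  have "\<bar>real_of_int (k - \<lfloor>\<xi>\<rfloor>)\<bar> \<le> \<bar>\<xi> - real_of_int k\<bar> + 1"
    using floor_correct[of \<xi>] by (simp add: abs_if) linarith
  then have "1 + \<bar>real_of_int (k - \<lfloor>\<xi>\<rfloor>)\<bar> \<le> 2 * (1 + \<bar>\<xi> - real_of_int k\<bar>)"
    using abs_ge_zero[of "\<xi> - real_of_int k"] by argo
  then have "(1 + \<bar>real_of_int (k - \<lfloor>\<xi>\<rfloor>)\<bar>)^2 \<le> (2 * (1 + \<bar>\<xi> - real_of_int k\<bar>))^2"
    by (rule power_mono) simp
  then have "(1 + \<bar>real_of_int (k - \<lfloor>\<xi>\<rfloor>)\<bar>)^2 \<le> 4 * (1 + \<bar>\<xi> - real_of_int k\<bar>)^2"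
    by (simp only: power_mult_distrib) simp
  then show ?thesis
    by (simp add: field_simps)
qed

lemma
  fixes \<xi> :: real
  shows summable_on_inverse_square_shift:
      "(\<lambda>k::int. 1 / (1 + \<bar>\<xi> - real_of_int k\<bar>)^2) summable_on UNIV"
    and infsum_inverse_square_shift_le:
      "(\<Sum>\<^sub>\<infinity>k::int. 1 / (1 + \<bar>\<xi> - real_of_int k\<bar>)^2)
         \<le> 4 * (\<Sum>\<^sub>\<infinity>k::int. 1 / (1 + \<bar>real_of_int k\<bar>)^2)"
proof -
  define w where "w k = 1 / (1 + \<bar>real_of_int k\<bar>)^2" for k :: int
  have bij: "bij_betw (\<lambda>k. k - \<lfloor>\<xi>\<rfloor>) UNIV UNIV"
    by (rule bij_betwI[where g="\<lambda>k. k + \<lfloor>\<xi>\<rfloor>"]) auto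
  have "w summable_on UNIV"
    unfolding w_def by (rule summable_on_inverse_square_int)
  then have "(\<lambda>k. w (k - \<lfloor>\<xi>\<rfloor>)) summable_on UNIV"
    using summable_on_reindex_bij_betw[OF bij, of w] by (simp add: o_def)
  then have shifted: "(\<lambda>k. 4 * w (k - \<lfloor>\<xi>\<rfloor>)) summable_on UNIV"
    by (rule summable_on_cmult_right)
  have le: "1 / (1 + \<bar>\<xi> - real_of_int k\<bar>)^2 \<le> 4 * w (k - \<lfloor>\<xi>\<rfloor>)" for k
    using inverse_square_shift_le[of \<xi> k] by (simp add: w_def)
  show summable: "(\<lambda>k::int. 1 / (1 + \<bar>\<xi> - real_of_int k\<bar>)^2) summable_on UNIV"
    by (rule summable_on_comparison_test[OF shifted]) (use le in auto)
  have "(\<Sum>\<^sub>\<infinity>k::int. 1 / (1 + \<bar>\<xi> - real_of_int k\<bar>)^2) \<le> (\<Sum>\<^sub>\<infinity>k. 4 * w (k - \<lfloor>\<xi>\<rfloor>))"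
    by (rule infsum_mono[OF summable shifted le])
  also have "\<dots> = 4 * (\<Sum>\<^sub>\<infinity>k. w k)"
    using infsum_reindex_bij_betw[OF bij, of w] by (simp add: infsum_cmult_right' o_def)
  finally show "(\<Sum>\<^sub>\<infinity>k::int. 1 / (1 + \<bar>\<xi> - real_of_int k\<bar>)^2)
      \<le> 4 * (\<Sum>\<^sub>\<infinity>k::int. 1 / (1 + \<bar>real_of_int k\<bar>)^2)"
    by (simp add: w_def)
qed

lemma tendsto_symmetric_partial_sums_infsum:
  fixes f :: "int \<Rightarrow> 'a::{topological_comm_monoid_add, t2_space}"
  assumes "f summable_on UNIV"
  shows "(\<lambda>N::nat. \<Sum>k\<in>{-int N..int N}. f k) \<longlonglongrightarrow> infsum f UNIV"
proof -
  have "(sum f \<longlongrightarrow> infsum f UNIV) (finite_subsets_at_top UNIV)"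
    using has_sum_infsum[OF assms] unfolding has_sum_def .
  moreover have "filterlim (\<lambda>N::nat. {-int N..int N}) (finite_subsets_at_top UNIV) sequentially"
  proof (subst filterlim_finite_subsets_at_top, safe)
    fix X :: "int set" assume "finite X"
    then obtain B where B: "\<And>x. x \<in> X \<Longrightarrow> \<bar>x\<bar> \<le> B"
      by (metis finite_imageI finite_nat_set_iff_bounded_le image_eqI nat_int nat_le_iff)
    show "\<forall>\<^sub>F N in sequentially. finite {- int N..int N} \<and> X \<subseteq> {- int N..int N} \<and> {- int N..int N} \<subseteq> UNIV"
      using eventually_ge_at_top[of "nat B"] by eventually_elim (use B in force)
  qed
  ultimately show ?thesis
    by (rule filterlim_compose)
qed

section \<open>The Riemann--Lebesgue lemma\<close>

lemma has_vector_derivative_exp_i_times: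
  "((\<lambda>x::real. exp (\<i> * complex_of_real (M * x))) has_vector_derivative
     (\<i> * complex_of_real M * exp (\<i> * complex_of_real (M * x)))) (at x within S)"
proof -
  have "((\<lambda>z. exp (\<i> * complex_of_real M * z)) has_field_derivative
          \<i> * complex_of_real M * exp (\<i> * complex_of_real M * complex_of_real x)) (at (complex_of_real x))"
    by (auto intro!: derivative_eq_intros)
  from has_vector_derivative_real_field[OF this, where s=S] show ?thesis
    by (simp add: mult.assoc)
qed

lemma integral_mult_exp_by_parts:
  fixes g g' :: "real \<Rightarrow> complex"
  assumes "a \<le> b"
    and deriv: "\<And>x. x \<in> {a..b} \<Longrightarrow> (g has_vector_derivative g' x) (at x within {a..b})"
    and "continuous_on {a..b} g'"
  shows "integral {a..b} (\<lambda>x. g' x * exp (\<i> * complex_of_real (M * x))) =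
     g b * exp (\<i> * complex_of_real (M * b)) - g a * exp (\<i> * complex_of_real (M * a))
     - \<i> * complex_of_real M * integral {a..b} (\<lambda>x. g x * exp (\<i> * complex_of_real (M * x)))"
proof -
  define e where "e x = exp (\<i> * complex_of_real (M * x))" for x
  have "continuous_on {a..b} g"
    using deriv by (rule continuous_on_vector_derivative)
  then have int_g: "(\<lambda>x. g x * e x) integrable_on {a..b}"
    unfolding e_def by (intro integrable_continuous_interval continuous_intros)
  have int_g': "(\<lambda>x. g' x * e x) integrable_on {a..b}"
    using assms(3) unfolding e_def by (intro integrable_continuous_interval continuous_intros)
  define c where "c = \<i> * complex_of_real M"
  have "((\<lambda>x. g x * (c * e x) + g' x * e x) has_integral (g b * e b - g a * e a)) {a..b}"
    using assms(1) deriv unfolding e_def c_def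
    by (intro fundamental_theorem_of_calculus has_vector_derivative_mult has_vector_derivative_exp_i_times)
  then have "integral {a..b} (\<lambda>x. c * (g x * e x) + g' x * e x) = g b * e b - g a * e a"
    by (simp add: integral_unique mult.left_commute)
  moreover have "integral {a..b} (\<lambda>x. c * (g x * e x) + g' x * e x)
      = c * integral {a..b} (\<lambda>x. g x * e x) + integral {a..b} (\<lambda>x. g' x * e x)"
    using integral_add[OF integrable_on_mult_right[OF int_g, of c] int_g'] by simp
  ultimately have "c * integral {a..b} (\<lambda>x. g x * e x) + integral {a..b} (\<lambda>x. g' x * e x)
      = g b * e b - g a * e a"
    by simp
  then show ?thesis
    unfolding e_def c_def by (simp add: algebra_simps)
qed

lemma norm_integral_mult_exp_le:
  fixes g g' :: "real \<Rightarrow> complex"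
  assumes ab: "a \<le> b"
    and deriv: "\<And>x. x \<in> {a..b} \<Longrightarrow> (g has_vector_derivative g' x) (at x within {a..b})"
    and cont: "continuous_on {a..b} g'"
    and bound: "\<And>x. x \<in> {a..b} \<Longrightarrow> norm (g' x) \<le> B"
  shows "\<bar>M\<bar> * norm (integral {a..b} (\<lambda>x. g x * exp (\<i> * complex_of_real (M * x))))
      \<le> norm (g a) + norm (g b) + B * (b - a)"
proof -
  define e where "e x = exp (\<i> * complex_of_real (M * x))" for x
  define J where "J = integral {a..b} (\<lambda>x. g' x * e x)"
  have "((\<lambda>x. g' x * e x) has_integral J) (cbox a b)"
    unfolding J_def e_def cbox_interval
    by (intro integrable_integral integrable_continuous_interval continuous_intros cont)
  moreover have "0 \<le> B"
    using order_trans[OF norm_ge_zero bound[of a]] ab by simp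
  ultimately have "norm J \<le> B * Henstock_Kurzweil_Integration.content (cbox a b)"
    using bound by (intro has_integral_bound) (auto simp: e_def norm_mult norm_exp_i_times)
  then have J: "norm J \<le> B * (b - a)"
    using ab by simp
  have by_parts: "\<i> * complex_of_real M * integral {a..b} (\<lambda>x. g x * e x) = g b * e b - g a * e a - J"
    using integral_mult_exp_by_parts[OF ab deriv cont, of M] unfolding J_def e_def by simp
  have "norm (g b * e b - g a * e a - J) \<le> norm (g b) + norm (g a) + norm J"
    using norm_triangle_ineq4[of "g b * e b - g a * e a" J] norm_triangle_ineq4[of "g b * e b" "g a * e a"]
    by (simp add: e_def norm_mult norm_exp_i_times)
  then have "norm (\<i> * complex_of_real M * integral {a..b} (\<lambda>x. g x * e x)) \<le> norm (g a) + norm (g b) + B * (b - a)"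
    unfolding by_parts using J by linarith
  then show ?thesis
    by (simp add: norm_mult e_def)
qed

lemma riemann_lebesgue_C1:
  fixes g g' :: "real \<Rightarrow> complex"
  assumes ab: "a \<le> b"
    and deriv: "\<And>x. x \<in> {a..b} \<Longrightarrow> (g has_vector_derivative g' x) (at x within {a..b})"
    and cont: "continuous_on {a..b} g'"
  shows "((\<lambda>M. integral {a..b} (\<lambda>x. g x * exp (\<i> * complex_of_real (M * x)))) \<longlongrightarrow> 0) at_infinity"
proof -
  obtain B where B: "\<And>x. x \<in> {a..b} \<Longrightarrow> norm (g' x) \<le> B"
    using compact_imp_bounded[OF compact_continuous_image[OF cont compact_Icc]]
    unfolding bounded_iff by blast
  define K where "K = norm (g a) + norm (g b) + B * (b - a)"
  have "\<forall>\<^sub>F M in at_infinity. norm (integral {a..b} (\<lambda>x. g x * exp (\<i> * complex_of_real (M * x)))) \<le> K / norm M"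
  proof -
    have "\<forall>\<^sub>F M::real in at_infinity. M \<noteq> 0"
      unfolding eventually_at_infinity by (intro exI[of _ 1]) auto
    then show ?thesis
    proof eventually_elim
      case (elim M)
      then show ?case
        using norm_integral_mult_exp_le[OF ab deriv cont B, of M]
        by (simp add: K_def field_simps)
    qed
  qed
  moreover have "((\<lambda>M::real. K / norm M) \<longlongrightarrow> 0) at_infinity"
    by (intro tendsto_divide_0[OF tendsto_const] filterlim_at_top_imp_at_infinity
        filterlim_at_infinity_imp_norm_at_top filterlim_ident)
  ultimately show ?thesis
    by (rule Lim_null_comparison)
qed

section \<open>Fourier transforms of smooth compactly supported functions\<close>

lemma fourier_eq_integral_Icc:
  assumes cont: "continuous_on UNIV f" and vanishes: "\<And>x. c < \<bar>x\<bar> \<Longrightarrow> f x = 0"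
  shows "fourier f \<eta> = integral {-c..c} (\<lambda>x. complex_of_real (f x) * exp (\<i> * complex_of_real ((-\<eta>) * x)))
      / (2 * complex_of_real pi)"
proof -
  have restrict: "(\<lambda>x. complex_of_real (f x) * exp (- \<i> * complex_of_real (x * \<eta>))) =
     (\<lambda>x. if x \<in> {-c..c} then complex_of_real (f x) * exp (\<i> * complex_of_real ((-\<eta>) * x)) else 0)"
    using vanishes by (auto simp: fun_eq_iff mult.commute abs_le_iff)
  have "(\<lambda>x. complex_of_real (f x) * exp (\<i> * complex_of_real ((-\<eta>) * x))) integrable_on {-c..c}"
    by (intro integrable_continuous_interval continuous_intros continuous_on_subset[OF cont]) auto
  then have "integral UNIV (\<lambda>x. complex_of_real (f x) * exp (- \<i> * complex_of_real (x * \<eta>)))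
      = integral {-c..c} (\<lambda>x. complex_of_real (f x) * exp (\<i> * complex_of_real ((-\<eta>) * x)))"
    unfolding restrict
    by (intro integral_unique) (subst has_integral_restrict_UNIV, rule integrable_integral)
  then show ?thesis
    unfolding fourier_def by simp
qed

lemma fourier_bounded:
  assumes cont: "continuous_on UNIV f" and vanishes: "\<And>x. c < \<bar>x\<bar> \<Longrightarrow> f x = 0"
  obtains B where "\<And>\<eta>. norm (fourier f \<eta>) \<le> B"
proof -
  define r where "r = \<bar>c\<bar>"
  have vanishes_r: "\<And>x. r < \<bar>x\<bar> \<Longrightarrow> f x = 0"
    using vanishes by (simp add: r_def)
  obtain B where B: "\<And>x. x \<in> {-r..r} \<Longrightarrow> \<bar>f x\<bar> \<le> B"
    using compact_imp_bounded[OF compact_continuous_image[OF continuous_on_subset[OF cont] compact_Icc]]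
    unfolding bounded_iff by force
  have "norm (fourier f \<eta>) \<le> B * (2 * r) / (2 * pi)" for \<eta>
  proof -
    have "0 \<le> B"
      using B[of 0] by (simp add: r_def)
    moreover have "((\<lambda>x. complex_of_real (f x) * exp (\<i> * complex_of_real ((-\<eta>) * x))) has_integral
        integral {-r..r} (\<lambda>x. complex_of_real (f x) * exp (\<i> * complex_of_real ((-\<eta>) * x)))) (cbox (-r) r)"
      unfolding cbox_interval
      by (intro integrable_integral integrable_continuous_interval continuous_intros continuous_on_subset[OF cont]) auto
    ultimately have "norm (integral {-r..r} (\<lambda>x. complex_of_real (f x) * exp (\<i> * complex_of_real ((-\<eta>) * x))))
        \<le> B * Henstock_Kurzweil_Integration.content (cbox (-r) r)"
      using B by (intro has_integral_bound) (auto simp: norm_mult norm_exp_i_times)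
    then have "norm (integral {-r..r} (\<lambda>x. complex_of_real (f x) * exp (\<i> * complex_of_real ((-\<eta>) * x))))
        / (2 * pi) \<le> B * (2 * r) / (2 * pi)"
      by (intro divide_right_mono) (auto simp: r_def)
    then show ?thesis
      by (simp add: fourier_eq_integral_Icc[OF cont vanishes_r] norm_divide)
  qed
  then show ?thesis
    using that by blast
qed

locale smooth_compact_support =
  fixes h :: "real \<Rightarrow> real" and \<rho> :: real
  assumes smooth: "smooth h"
    and vanishes: "\<And>x. \<rho> < \<bar>x\<bar> \<Longrightarrow> h x = 0"
begin

lemma has_real_derivative_iterated_deriv:
  "((deriv ^^ n) h has_real_derivative (deriv ^^ Suc n) h x) (at x)"
  using smooth unfolding smooth_def by (simp add: DERIV_deriv_iff_real_differentiable)

lemma continuous_on_iterated_deriv: "continuous_on S ((deriv ^^ n) h)"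
  by (rule continuous_at_imp_continuous_on) (meson DERIV_isCont has_real_derivative_iterated_deriv)

lemma iterated_deriv_vanishes: "\<rho> < \<bar>x\<bar> \<Longrightarrow> (deriv ^^ n) h x = 0"
proof (induction n arbitrary: x)
  case 0
  then show ?case
    using vanishes by simp
next
  case (Suc n)
  have "open {y::real. \<rho> < \<bar>y\<bar>}"
    by (intro open_Collect_less continuous_intros)
  moreover have "((\<lambda>_. 0) has_real_derivative 0) (at x)"
    by simp
  ultimately have "((deriv ^^ n) h has_real_derivative 0) (at x)"
    using has_field_derivative_transform_within_open Suc by (metis (mono_tags, lifting) mem_Collect_eq)
  then show ?case
    using has_real_derivative_iterated_deriv DERIV_unique by blast
qed

lemma fourier_deriv:
  "fourier ((deriv ^^ Suc n) h) \<eta> = \<i> * complex_of_real \<eta> * fourier ((deriv ^^ n) h) \<eta>"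
proof -
  define c where "c = \<bar>\<rho>\<bar> + 1"
  have c: "-c \<le> c" "(deriv ^^ n) h c = 0" "(deriv ^^ n) h (-c) = 0"
    by (auto simp: c_def intro!: iterated_deriv_vanishes)
  have vanishes_c: "\<And>x. c < \<bar>x\<bar> \<Longrightarrow> (deriv ^^ m) h x = 0" for m
    by (rule iterated_deriv_vanishes) (simp add: c_def)
  have deriv: "((\<lambda>x. complex_of_real ((deriv ^^ n) h x)) has_vector_derivative
      complex_of_real ((deriv ^^ Suc n) h x)) (at x within {-c..c})" for x
    by (rule has_vector_derivative_at_within, rule has_vector_derivative_of_real,
        rule has_real_derivative_iterated_deriv)
  have "continuous_on {-c..c} (\<lambda>x. complex_of_real ((deriv ^^ Suc n) h x))"
    by (intro continuous_intros continuous_on_iterated_deriv)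
  from integral_mult_exp_by_parts[OF \<open>-c \<le> c\<close> deriv this, of "-\<eta>"] show ?thesis
    using c
    by (simp add: fourier_eq_integral_Icc[OF continuous_on_iterated_deriv vanishes_c] del: funpow.simps)
qed

lemma fourier_iterated_deriv:
  "fourier ((deriv ^^ n) h) \<eta> = (\<i> * complex_of_real \<eta>) ^ n * fourier h \<eta>"
  by (induction n) (simp_all add: fourier_deriv del: funpow.simps)

lemma fourier_decay:
  obtains C where "\<And>\<eta>. norm (fourier h \<eta>) \<le> C / (1 + \<bar>\<eta>\<bar>) ^ m"
proof -
  have vanishes_c: "\<And>x. \<bar>\<rho>\<bar> < \<bar>x\<bar> \<Longrightarrow> (deriv ^^ n) h x = 0" for n
    by (rule iterated_deriv_vanishes) simp
  obtain B0 where B0: "\<And>\<eta>. norm (fourier ((deriv ^^ 0) h) \<eta>) \<le> B0"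
    using fourier_bounded[OF continuous_on_iterated_deriv vanishes_c] by blast
  obtain Bm where Bm: "\<And>\<eta>. norm (fourier ((deriv ^^ m) h) \<eta>) \<le> Bm"
    using fourier_bounded[OF continuous_on_iterated_deriv vanishes_c] by blast
  have "(1 + \<bar>\<eta>\<bar>) ^ m * norm (fourier h \<eta>) \<le> 2 ^ m * max B0 Bm" for \<eta>
  proof (cases "\<bar>\<eta>\<bar> \<le> 1")
    case True
    have "(1 + \<bar>\<eta>\<bar>) ^ m \<le> 2 ^ m"
      by (rule power_mono) (use True in auto)
    moreover have "norm (fourier h \<eta>) \<le> max B0 Bm"
      using B0[of \<eta>] by simp
    ultimately show ?thesis
      by (intro mult_mono) auto
  next
    case False
    have "(1 + \<bar>\<eta>\<bar>) ^ m \<le> 2 ^ m * \<bar>\<eta>\<bar> ^ m"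
      using power_mono[of "1 + \<bar>\<eta>\<bar>" "2 * \<bar>\<eta>\<bar>" m] False by (simp add: power_mult_distrib)
    then have "(1 + \<bar>\<eta>\<bar>) ^ m * norm (fourier h \<eta>) \<le> 2 ^ m * (\<bar>\<eta>\<bar> ^ m * norm (fourier h \<eta>))"
      using mult_right_mono[OF _ norm_ge_zero] by (metis mult.assoc)
    also have "\<bar>\<eta>\<bar> ^ m * norm (fourier h \<eta>) = norm (fourier ((deriv ^^ m) h) \<eta>)"
      unfolding fourier_iterated_deriv norm_mult norm_power by simp
    also have "2 ^ m * norm (fourier ((deriv ^^ m) h) \<eta>) \<le> 2 ^ m * max B0 Bm"
      by (intro mult_left_mono max.coboundedI2 Bm) simp
    finally show ?thesis .
  qed
  then have "norm (fourier h \<eta>) \<le> 2 ^ m * max B0 Bm / (1 + \<bar>\<eta>\<bar>) ^ m" for \<eta>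
    by (simp add: field_simps)
  then show ?thesis
    using that by blast
qed

end

section \<open>Poisson summation\<close>

definition dirichlet_kernel :: "nat \<Rightarrow> real \<Rightarrow> complex" where
  "dirichlet_kernel N x = (\<Sum>k\<in>{-int N..int N}. exp (\<i> * complex_of_real (real_of_int k * x)))"

lemma dirichlet_kernel_Suc:
  "dirichlet_kernel (Suc N) x = dirichlet_kernel N x
     + exp (\<i> * complex_of_real ((real N + 1) * x)) + exp (\<i> * complex_of_real ((- real N - 1) * x))"
proof -
  have "{-int (Suc N)..int (Suc N)} = insert (-int (Suc N)) (insert (int (Suc N)) {-int N..int N})"
    by auto
  then show ?thesis
    unfolding dirichlet_kernel_def by (simp add: algebra_simps) (metis add.commute diff_conv_add_uminus)
qed

lemma dirichlet_kernel_mult_exp_minus_one: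
  "dirichlet_kernel N x * (exp (\<i> * complex_of_real x) - 1) =
     exp (\<i> * complex_of_real ((real N + 1) * x)) - exp (\<i> * complex_of_real (- real N * x))"
proof (induction N)
  case 0
  then show ?case
    by (simp add: dirichlet_kernel_def algebra_simps)
next
  case (Suc N)
  define e where "e t = exp (\<i> * complex_of_real t)" for t
  have e_mult: "e s * e t = e (s + t)" for s t
    by (simp add: e_def algebra_simps flip: exp_add)
  have "dirichlet_kernel (Suc N) x * (e x - 1)
      = dirichlet_kernel N x * (e x - 1) + (e ((real N + 1) * x) * e x - e ((real N + 1) * x))
        + (e ((- real N - 1) * x) * e x - e ((- real N - 1) * x))"
    unfolding dirichlet_kernel_Suc e_def by (simp add: algebra_simps)
  also have "\<dots> = e ((real (Suc N) + 1) * x) - e (- real (Suc N) * x)"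
    unfolding Suc[folded e_def] e_mult by (simp add: algebra_simps) (metis add.commute diff_conv_add_uminus)
  finally show ?case
    by (simp add: e_def)
qed

lemma integral_exp_int_times:
  "integral {-pi..pi} (\<lambda>x. exp (\<i> * complex_of_real (real_of_int k * x)))
     = (if k = 0 then 2 * complex_of_real pi else 0)"
proof (cases "k = 0")
  case True
  then show ?thesis
    by (simp add: scaleR_conv_of_real)
next
  case False
  define c where "c = \<i> * complex_of_real (real_of_int k)"
  have "((\<lambda>x. exp (\<i> * complex_of_real (real_of_int k * x)) / c) has_vector_derivative
      exp (\<i> * complex_of_real (real_of_int k * x))) (at x within {-pi..pi})" for x
    using has_vector_derivative_divide[OF has_vector_derivative_exp_i_times[of "real_of_int k" x "{-pi..pi}"], of c] False
    by (simp add: c_def)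
  then have "((\<lambda>x. exp (\<i> * complex_of_real (real_of_int k * x))) has_integral
          exp (\<i> * complex_of_real (real_of_int k * pi)) / c - exp (\<i> * complex_of_real (real_of_int k * (-pi))) / c) {-pi..pi}"
    by (intro fundamental_theorem_of_calculus) auto
  moreover have "exp (\<i> * complex_of_real (real_of_int k * pi)) = exp (\<i> * complex_of_real (real_of_int k * (-pi)))"
    using exp_plus_2pin[of "\<i> * complex_of_real (real_of_int k * (-pi))" k]
    by (simp add: algebra_simps)
  ultimately show ?thesis
    using False by (simp add: integral_unique)
qed

lemma integral_dirichlet_kernel: "integral {-pi..pi} (dirichlet_kernel N) = 2 * complex_of_real pi"
proof -
  have "integral {-pi..pi} (dirichlet_kernel N)
      = (\<Sum>k\<in>{-int N..int N}. integral {-pi..pi} (\<lambda>x. exp (\<i> * complex_of_real (real_of_int k * x))))"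
    unfolding dirichlet_kernel_def
    by (intro integral_sum integrable_continuous_interval continuous_intros) auto
  also have "\<dots> = 2 * complex_of_real pi"
    unfolding integral_exp_int_times by simp
  finally show ?thesis .
qed

lemma exp_i_times_neq_1:
  assumes "0 < \<bar>x\<bar>" "\<bar>x\<bar> < 2 * pi"
  shows "exp (\<i> * complex_of_real x) \<noteq> 1"
proof
  assume "exp (\<i> * complex_of_real x) = 1"
  then obtain n :: int where n: "x = of_int (2 * n) * pi"
    by (auto simp: exp_eq_1)
  then have "n \<noteq> 0"
    using assms by auto
  then have "2 * pi \<le> \<bar>x\<bar>"
    unfolding n using pi_gt_zero by (simp add: abs_mult)
  then show False
    using assms by simp
qed

lemma has_vector_derivative_real_times_holomorphic:
  assumes "V holomorphic_on W" "open W" "complex_of_real x \<in> W"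
    and "(\<phi> has_real_derivative \<phi>') (at x)"
  shows "((\<lambda>x. complex_of_real (\<phi> x) * V (complex_of_real x)) has_vector_derivative
     complex_of_real (\<phi> x) * deriv V (complex_of_real x) + complex_of_real \<phi>' * V (complex_of_real x)) (at x within S)"
proof -
  have "(V has_field_derivative deriv V (complex_of_real x)) (at (complex_of_real x))"
    using assms(1-3) by (simp add: holomorphic_derivI)
  then show ?thesis
    by (rule has_vector_derivative_mult[OF has_vector_derivative_of_real[OF assms(4)]
          has_vector_derivative_real_field, THEN has_vector_derivative_at_within, THEN has_vector_derivative_eq_rhs])
      (simp add: algebra_simps)
qed

text \<open>
  By the telescoping identity for the Dirichlet kernel, f D_N = phi V (exp(i (N+1) x) - exp(-i N x)),
  and both terms vanish in the limit by Riemann--Lebesgue; holomorphy of V is only used to make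
  phi V continuously differentiable.
\<close>
lemma integral_dirichlet_kernel_tendsto_zero:
  assumes hol: "V holomorphic_on W" and W: "open W" and in_W: "\<And>x. x \<in> {a..b} \<Longrightarrow> complex_of_real x \<in> W"
    and ab: "a \<le> b"
    and \<phi>: "\<And>x. (\<phi> has_real_derivative \<phi>' x) (at x)" and \<phi>': "continuous_on {a..b} \<phi>'"
    and f: "\<And>x. x \<in> {a..b} \<Longrightarrow> f x = complex_of_real (\<phi> x) * V (complex_of_real x) * (exp (\<i> * complex_of_real x) - 1)"
  shows "(\<lambda>N. integral {a..b} (\<lambda>x. f x * dirichlet_kernel N x)) \<longlonglongrightarrow> 0"
proof -
  define g where "g x = complex_of_real (\<phi> x) * V (complex_of_real x)" for x
  define e where "e M x = exp (\<i> * complex_of_real (M * x))" for M x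
  have cont_V: "continuous_on {a..b} (\<lambda>x. V (complex_of_real x))"
    by (rule continuous_on_compose2[OF holomorphic_on_imp_continuous_on[OF hol]])
      (auto intro!: continuous_intros in_W)
  have cont_V': "continuous_on {a..b} (\<lambda>x. deriv V (complex_of_real x))"
    by (rule continuous_on_compose2[OF holomorphic_on_imp_continuous_on[OF holomorphic_deriv[OF hol W]]])
      (auto intro!: continuous_intros in_W)
  have cont_\<phi>: "continuous_on {a..b} \<phi>"
    by (rule continuous_at_imp_continuous_on) (meson DERIV_isCont \<phi>)
  have RL: "((\<lambda>M. integral {a..b} (\<lambda>x. g x * e M x)) \<longlongrightarrow> 0) at_infinity"
    unfolding g_def e_def
    by (rule riemann_lebesgue_C1[OF ab has_vector_derivative_real_times_holomorphic[OF hol W in_W \<phi>]],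
        assumption, intro continuous_intros cont_\<phi> \<phi>' cont_V cont_V')
  have to_infinity_pos: "filterlim (\<lambda>N. real N + 1) at_infinity sequentially"
  proof -
    have "filterlim (\<lambda>N. 1 + real N) at_top sequentially"
      by (rule filterlim_tendsto_add_at_top[OF tendsto_const filterlim_real_sequentially])
    then show ?thesis
      by (simp add: add.commute filterlim_at_top_imp_at_infinity)
  qed
  have to_infinity_neg: "filterlim (\<lambda>N. - real N) at_infinity sequentially"
    using filterlim_uminus_at_top[THEN iffD1, OF filterlim_real_sequentially]
    by (rule filterlim_mono[OF _ at_bot_le_at_infinity order_refl])
  have "(\<lambda>N. integral {a..b} (\<lambda>x. g x * e (real N + 1) x) - integral {a..b} (\<lambda>x. g x * e (- real N) x))
      \<longlonglongrightarrow> 0 - 0"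
    using tendsto_diff[OF filterlim_compose[OF RL to_infinity_pos] filterlim_compose[OF RL to_infinity_neg]] .
  moreover have "integral {a..b} (\<lambda>x. f x * dirichlet_kernel N x)
      = integral {a..b} (\<lambda>x. g x * e (real N + 1) x) - integral {a..b} (\<lambda>x. g x * e (- real N) x)" for N
  proof -
    have "f x * dirichlet_kernel N x = g x * e (real N + 1) x - g x * e (- real N) x" if "x \<in> {a..b}" for x
    proof -
      have "f x * dirichlet_kernel N x = g x * (dirichlet_kernel N x * (exp (\<i> * complex_of_real x) - 1))"
        using f[OF that] by (simp add: g_def mult_ac)
      also have "\<dots> = g x * (e (real N + 1) x - e (- real N) x)"
        unfolding dirichlet_kernel_mult_exp_minus_one e_def ..
      finally show ?thesis
        by (simp add: right_diff_distrib)
    qed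
    then have "integral {a..b} (\<lambda>x. f x * dirichlet_kernel N x) = integral {a..b} (\<lambda>x. g x * e (real N + 1) x - g x * e (- real N) x)"
      by (rule integral_cong)
    also have "\<dots> = integral {a..b} (\<lambda>x. g x * e (real N + 1) x) - integral {a..b} (\<lambda>x. g x * e (- real N) x)"
      unfolding g_def e_def
      by (intro integral_diff integrable_continuous_interval continuous_intros cont_\<phi> cont_V)
    finally show ?thesis .
  qed
  ultimately show ?thesis
    by simp
qed

text \<open>U is (exp(i c z) - 1) / (exp(i z) - 1), with its removable singularity at 0 filled in.\<close>
lemma holomorphic_quotient_exp_minus_one:
  fixes c :: real
  obtains U W where "open W" "U holomorphic_on W" "\<And>x. x \<in> {-pi..pi} \<Longrightarrow> complex_of_real x \<in> W"
    and "\<And>x. x \<in> {-pi..pi} \<Longrightarrow>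
      exp (\<i> * complex_of_real (c * x)) - 1 = U (complex_of_real x) * (exp (\<i> * complex_of_real x) - 1)"
proof -
  define fA where "fA z = exp (\<i> * complex_of_real c * z)" for z
  define fB where "fB z = exp (\<i> * z)" for z
  define A where "A = (\<lambda>z. if z = 0 then deriv fA 0 else (fA z - fA 0) / (z - 0))"
  define B where "B = (\<lambda>z. if z = 0 then deriv fB 0 else (fB z - fB 0) / (z - 0))"
  have "fA holomorphic_on UNIV" "fB holomorphic_on UNIV"
    unfolding fA_def fB_def by (intro holomorphic_intros)+
  then have "A holomorphic_on UNIV" "B holomorphic_on UNIV"
    unfolding A_def B_def by (auto intro: pole_lemma)
  have "deriv fB 0 = \<i>"
    unfolding fB_def by (rule DERIV_imp_deriv) (auto intro!: derivative_eq_intros)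
  define W where "W = {z. B z \<noteq> 0}"
  have "open W"
    unfolding W_def
    by (rule open_Collect_neq) (auto intro: holomorphic_on_imp_continuous_on \<open>B holomorphic_on UNIV\<close>)
  moreover have "(\<lambda>z. A z / B z) holomorphic_on W"
    unfolding W_def
    by (intro holomorphic_intros holomorphic_on_subset[OF \<open>A holomorphic_on UNIV\<close>]
        holomorphic_on_subset[OF \<open>B holomorphic_on UNIV\<close>]) auto
  moreover have exp_neq: "exp (\<i> * complex_of_real x) \<noteq> 1" if "x \<in> {-pi..pi}" "x \<noteq> 0" for x
    using that pi_gt3 by (intro exp_i_times_neq_1) auto
  then have "complex_of_real x \<in> W" if "x \<in> {-pi..pi}" for x
    using that \<open>deriv fB 0 = \<i>\<close> by (cases "x = 0") (auto simp: W_def B_def fB_def)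
  moreover have "exp (\<i> * complex_of_real (c * x)) - 1 = A x / B x * (exp (\<i> * complex_of_real x) - 1)"
    if "x \<in> {-pi..pi}" for x
    using that exp_neq[of x] by (cases "x = 0") (auto simp: A_def B_def fA_def fB_def field_simps)
  ultimately show ?thesis
    using that by blast
qed

context smooth_compact_support
begin

lemma summable_on_norm_fourier_shift:
  "(\<lambda>k::int. norm (fourier h (\<xi> - real_of_int k))) summable_on UNIV"
proof -
  obtain C where C: "\<And>\<eta>. norm (fourier h \<eta>) \<le> C / (1 + \<bar>\<eta>\<bar>) ^ 2"
    using fourier_decay by blast
  show ?thesis
    by (rule Infinite_Sum.abs_summable_on_comparison_test'[OF summable_on_cmult_right[OF summable_on_inverse_square_shift]])
      (use C in simp)
qed

lemma fourier_shift_sum_eq_integral: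
  assumes "\<rho> \<le> c"
  shows "2 * complex_of_real pi * (\<Sum>k\<in>{-int N..int N}. fourier h (\<xi> - real_of_int k))
    = integral {-c..c} (\<lambda>x. complex_of_real (h x) * exp (\<i> * complex_of_real ((-\<xi>) * x)) * dirichlet_kernel N x)"
proof -
  have cont_h: "continuous_on S h" for S
    using continuous_on_iterated_deriv[of S 0] by simp
  have vanishes_c: "\<And>x. c < \<bar>x\<bar> \<Longrightarrow> h x = 0"
    using assms by (intro vanishes) simp
  have "2 * complex_of_real pi * (\<Sum>k\<in>{-int N..int N}. fourier h (\<xi> - real_of_int k))
      = (\<Sum>k\<in>{-int N..int N}. integral {-c..c}
          (\<lambda>x. complex_of_real (h x) * exp (\<i> * complex_of_real ((- (\<xi> - real_of_int k)) * x))))"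
    by (simp add: sum_distrib_left fourier_eq_integral_Icc[OF cont_h vanishes_c])
  also have "\<dots> = integral {-c..c} (\<lambda>x. \<Sum>k\<in>{-int N..int N}.
      complex_of_real (h x) * exp (\<i> * complex_of_real ((- (\<xi> - real_of_int k)) * x)))"
    by (intro integral_sum[symmetric] integrable_continuous_interval continuous_intros cont_h) auto
  also have "\<dots> = integral {-c..c}
      (\<lambda>x. complex_of_real (h x) * exp (\<i> * complex_of_real ((-\<xi>) * x)) * dirichlet_kernel N x)"
    unfolding dirichlet_kernel_def sum_distrib_left
    by (intro integral_cong sum.cong refl) (simp add: algebra_simps flip: exp_add)
  finally show ?thesis .
qed

lemma tendsto_dirichlet_integral_off_origin:
  assumes "a \<le> b" and away: "\<And>x. x \<in> {a..b} \<Longrightarrow> 0 < \<bar>x\<bar> \<and> \<bar>x\<bar> < 2 * pi"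
  shows "(\<lambda>N. integral {a..b} (\<lambda>x. complex_of_real (h x) * exp (\<i> * complex_of_real ((-\<xi>) * x))
      * dirichlet_kernel N x)) \<longlonglongrightarrow> 0"
proof -
  define V where "V z = exp (\<i> * complex_of_real (-\<xi>) * z) / (exp (\<i> * z) - 1)" for z
  have "(h has_real_derivative deriv h x) (at x)" for x
    using has_real_derivative_iterated_deriv[of 0 x] by simp
  moreover have "continuous_on {a..b} (deriv h)"
    using continuous_on_iterated_deriv[of _ 1] by simp
  moreover have "open {z. exp (\<i> * z) \<noteq> 1}"
    by (rule open_Collect_neq) (auto intro!: continuous_intros)
  moreover have "V holomorphic_on {z. exp (\<i> * z) \<noteq> 1}"
    unfolding V_def by (intro holomorphic_intros) auto
  moreover have "complex_of_real x \<in> {z. exp (\<i> * z) \<noteq> 1}" if "x \<in> {a..b}" for x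
    using away[OF that] exp_i_times_neq_1 by auto
  moreover have "complex_of_real (h x) * exp (\<i> * complex_of_real ((-\<xi>) * x))
      = complex_of_real (h x) * V (complex_of_real x) * (exp (\<i> * complex_of_real x) - 1)"
    if "x \<in> {a..b}" for x
    using away[OF that] exp_i_times_neq_1 by (auto simp: V_def mult.assoc)
  ultimately show ?thesis
    by (intro integral_dirichlet_kernel_tendsto_zero[OF _ _ _ \<open>a \<le> b\<close>])
qed

end

locale poisson_bump = smooth_compact_support +
  assumes support_lt_2pi: "\<rho> < 2 * pi"
    and one_on_pi: "\<And>x. -pi \<le> x \<Longrightarrow> x \<le> pi \<Longrightarrow> h x = 1"
begin

lemma tendsto_dirichlet_integral_centre:
  "(\<lambda>N. integral {-pi..pi} (\<lambda>x. complex_of_real (h x) * exp (\<i> * complex_of_real ((-\<xi>) * x))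
      * dirichlet_kernel N x)) \<longlonglongrightarrow> 2 * complex_of_real pi"
proof -
  define E where "E x = exp (\<i> * complex_of_real ((-\<xi>) * x))" for x
  obtain U W where "open W" "U holomorphic_on W" "\<And>x. x \<in> {-pi..pi} \<Longrightarrow> complex_of_real x \<in> W"
    and U: "\<And>x. x \<in> {-pi..pi} \<Longrightarrow>
      E x - 1 = complex_of_real 1 * U (complex_of_real x) * (exp (\<i> * complex_of_real x) - 1)"
    using holomorphic_quotient_exp_minus_one[of "-\<xi>"] unfolding E_def by (metis mult_1 of_real_1)
  have "(\<lambda>N. integral {-pi..pi} (\<lambda>x. (E x - 1) * dirichlet_kernel N x)) \<longlonglongrightarrow> 0"
    by (rule integral_dirichlet_kernel_tendsto_zero[OF \<open>U holomorphic_on W\<close> \<open>open W\<close>, of _ _ "\<lambda>_. 1" "\<lambda>_. 0"])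
      (use \<open>\<And>x. x \<in> {-pi..pi} \<Longrightarrow> complex_of_real x \<in> W\<close> U pi_gt_zero in auto)
  then have "(\<lambda>N. integral {-pi..pi} (dirichlet_kernel N) + integral {-pi..pi} (\<lambda>x. (E x - 1) * dirichlet_kernel N x))
      \<longlonglongrightarrow> 2 * complex_of_real pi + 0"
    unfolding integral_dirichlet_kernel by (rule tendsto_add[OF tendsto_const])
  moreover have "integral {-pi..pi} (\<lambda>x. complex_of_real (h x) * E x * dirichlet_kernel N x)
      = integral {-pi..pi} (dirichlet_kernel N) + integral {-pi..pi} (\<lambda>x. (E x - 1) * dirichlet_kernel N x)" for N
  proof -
    have "integral {-pi..pi} (\<lambda>x. complex_of_real (h x) * E x * dirichlet_kernel N x)
        = integral {-pi..pi} (\<lambda>x. dirichlet_kernel N x + (E x - 1) * dirichlet_kernel N x)"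
      by (intro integral_cong) (simp add: one_on_pi algebra_simps)
    also have "\<dots> = integral {-pi..pi} (dirichlet_kernel N) + integral {-pi..pi} (\<lambda>x. (E x - 1) * dirichlet_kernel N x)"
      unfolding E_def dirichlet_kernel_def
      by (intro integral_add integrable_continuous_interval continuous_intros)
    finally show ?thesis .
  qed
  ultimately show ?thesis
    unfolding E_def by simp
qed

lemma poisson_summation: "(\<Sum>\<^sub>\<infinity>k::int. fourier h (\<xi> - real_of_int k)) = 1"
proof -
  have "pi \<le> \<rho>"
    using one_on_pi[of pi] vanishes[of pi] by force
  define L where "L = (\<rho> + 2 * pi) / 2"
  have L: "\<rho> \<le> L" "L < 2 * pi" "pi \<le> L"
    using \<open>pi \<le> \<rho>\<close> support_lt_2pi by (auto simp: L_def)
  define F where "F N = (\<lambda>x. complex_of_real (h x) * exp (\<i> * complex_of_real ((-\<xi>) * x)) * dirichlet_kernel N x)"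
    for N
  have integrable_F: "F N integrable_on {a..b}" for a b N
    using continuous_on_iterated_deriv[of _ 0] unfolding F_def dirichlet_kernel_def
    by (intro integrable_continuous_interval continuous_intros) simp
  have split: "integral {-L..L} (F N) = integral {-L..-pi} (F N) + integral {-pi..pi} (F N) + integral {pi..L} (F N)" for N
    using Henstock_Kurzweil_Integration.integral_combine[of "-L" "-pi" L "F N"]
      Henstock_Kurzweil_Integration.integral_combine[of "-pi" pi L "F N"] L pi_gt_zero
    by (simp add: integrable_F add.assoc)
  have "(\<lambda>N. integral {-L..-pi} (F N) + integral {-pi..pi} (F N) + integral {pi..L} (F N))
      \<longlonglongrightarrow> 0 + 2 * complex_of_real pi + 0"
    unfolding F_def using L pi_gt_zero
    by (intro tendsto_add tendsto_dirichlet_integral_centre tendsto_dirichlet_integral_off_origin) auto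
  moreover have "2 * complex_of_real pi * (\<Sum>k\<in>{-int N..int N}. fourier h (\<xi> - real_of_int k))
      = integral {-L..L} (F N)" for N
    unfolding F_def by (rule fourier_shift_sum_eq_integral[OF L(1)])
  ultimately have "(\<lambda>N. 2 * complex_of_real pi * (\<Sum>k\<in>{-int N..int N}. fourier h (\<xi> - real_of_int k)))
      \<longlonglongrightarrow> 2 * complex_of_real pi"
    by (simp add: split)
  then have "(\<lambda>N. inverse (2 * complex_of_real pi) * (2 * complex_of_real pi * (\<Sum>k\<in>{-int N..int N}. fourier h (\<xi> - real_of_int k))))
      \<longlonglongrightarrow> inverse (2 * complex_of_real pi) * (2 * complex_of_real pi)"
    by (rule tendsto_mult_left)
  then have "(\<lambda>N. \<Sum>k\<in>{-int N..int N}. fourier h (\<xi> - real_of_int k)) \<longlonglongrightarrow> 1"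
    by (simp add: mult.assoc[symmetric])
  moreover have "(\<lambda>N. \<Sum>k\<in>{-int N..int N}. fourier h (\<xi> - real_of_int k))
      \<longlonglongrightarrow> (\<Sum>\<^sub>\<infinity>k::int. fourier h (\<xi> - real_of_int k))"
    using summable_on_norm_fourier_shift
    by (intro tendsto_symmetric_partial_sums_infsum) (simp add: summable_on_iff_abs_summable_on_complex)
  ultimately show ?thesis
    using LIMSEQ_unique by blast
qed

end

section \<open>Estimates for the symbol\<close>

lemma abs_powr_neg_diff_le:
  fixes a b c p :: real
  assumes p: "0 < p" and c: "0 < c" "c \<le> a" "c \<le> b"
  shows "\<bar>a powr (-p) - b powr (-p)\<bar> \<le> p * c powr (-p-1) * \<bar>a - b\<bar>"
proof -
  have ordered: "\<bar>y powr (-p) - x powr (-p)\<bar> \<le> p * c powr (-p-1) * \<bar>y - x\<bar>" if "c \<le> x" "x < y" for x y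
  proof -
    have "\<And>t. x \<le> t \<Longrightarrow> t \<le> y \<Longrightarrow> ((\<lambda>t. t powr (-p)) has_real_derivative (-p) * t powr (-p - 1)) (at t)"
      using c that by (intro has_real_derivative_powr) auto
    from MVT2[OF \<open>x < y\<close> this] obtain z where z: "x < z" "z < y"
      and eq: "y powr (-p) - x powr (-p) = (y - x) * ((-p) * z powr (-p - 1))"
      by blast
    have "z powr (-p-1) \<le> c powr (-p-1)"
      by (rule powr_mono2') (use p c that z in auto)
    then have "\<bar>(y - x) * ((-p) * z powr (-p - 1))\<bar> \<le> (y - x) * (p * c powr (-p-1))"
      using that p by (simp add: abs_mult mult_left_mono)
    then show ?thesis
      unfolding eq using that by (simp add: algebra_simps)
  qed
  show ?thesis
    using ordered[of a b] ordered[of b a] c by (cases a b rule: linorder_cases) (auto simp: abs_minus_commute)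
qed

lemma dcoef_eq_delta_sym: "dcoef p dp dm k = delta_sym p dp dm (real_of_int k)"
  unfolding dcoef_def delta_sym_def by simp

lemma abs_delta_sym_le:
  assumes "0 \<le> p" and "1 \<le> \<bar>t\<bar> \<or> t = 0"
  shows "\<bar>delta_sym p dp dm t\<bar> \<le> max \<bar>dp\<bar> \<bar>dm\<bar>"
proof (cases "t = 0")
  case False
  then have "\<bar>t\<bar> powr (-p) \<le> 1"
    using assms by (simp add: powr_minus_divide ge_one_powr_ge_zero)
  then have "\<bar>dp\<bar> * \<bar>t\<bar> powr (-p) \<le> \<bar>dp\<bar>" "\<bar>dm\<bar> * \<bar>t\<bar> powr (-p) \<le> \<bar>dm\<bar>"
    by (simp_all add: mult_left_le)
  then show ?thesis
    unfolding delta_sym_def by (auto simp: abs_mult)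
qed (simp add: delta_sym_def)

lemma abs_dcoef_le: "0 \<le> p \<Longrightarrow> \<bar>dcoef p dp dm k\<bar> \<le> max \<bar>dp\<bar> \<bar>dm\<bar>"
  unfolding dcoef_eq_delta_sym by (rule abs_delta_sym_le) (auto simp flip: of_int_abs)

lemma abs_delta_sym_diff_le:
  assumes p: "0 < p" and "\<xi> \<noteq> 0" and t: "\<bar>t - \<xi>\<bar> \<le> \<bar>\<xi>\<bar> / 2"
  shows "\<bar>delta_sym p dp dm t - delta_sym p dp dm \<xi>\<bar>
    \<le> max \<bar>dp\<bar> \<bar>dm\<bar> * p * (\<bar>\<xi>\<bar> / 2) powr (-p-1) * \<bar>t - \<xi>\<bar>"
proof (cases "\<xi> > 0")
  case True
  then have "\<xi> / 2 \<le> t"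
    using t abs_ge_minus_self[of "t - \<xi>"] by linarith
  then have "\<bar>delta_sym p dp dm t - delta_sym p dp dm \<xi>\<bar> = \<bar>dp\<bar> * \<bar>t powr (-p) - \<xi> powr (-p)\<bar>"
    using True unfolding delta_sym_def by (simp add: abs_mult[symmetric] algebra_simps)
  also have "\<dots> \<le> \<bar>dp\<bar> * (p * (\<xi> / 2) powr (-p-1) * \<bar>t - \<xi>\<bar>)"
    by (intro mult_left_mono abs_powr_neg_diff_le) (use p True \<open>\<xi> / 2 \<le> t\<close> in auto)
  also have "\<dots> \<le> max \<bar>dp\<bar> \<bar>dm\<bar> * p * (\<bar>\<xi>\<bar> / 2) powr (-p-1) * \<bar>t - \<xi>\<bar>"
    using True p by (simp add: mult.assoc mult_right_mono)
  finally show ?thesis .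
next
  case False
  then have "\<xi> < 0" "t \<le> \<xi> / 2"
    using \<open>\<xi> \<noteq> 0\<close> t abs_ge_self[of "t - \<xi>"] by linarith+
  then have "\<bar>delta_sym p dp dm t - delta_sym p dp dm \<xi>\<bar> = \<bar>dm\<bar> * \<bar>\<bar>t\<bar> powr (-p) - \<bar>\<xi>\<bar> powr (-p)\<bar>"
    unfolding delta_sym_def by (simp add: abs_mult[symmetric] algebra_simps)
  also have "\<dots> \<le> \<bar>dm\<bar> * (p * (\<bar>\<xi>\<bar> / 2) powr (-p-1) * \<bar>\<bar>t\<bar> - \<bar>\<xi>\<bar>\<bar>)"
    by (intro mult_left_mono abs_powr_neg_diff_le) (use p \<open>\<xi> < 0\<close> \<open>t \<le> \<xi> / 2\<close> in auto)
  also have "\<bar>\<bar>t\<bar> - \<bar>\<xi>\<bar>\<bar> = \<bar>t - \<xi>\<bar>"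
    using \<open>\<xi> < 0\<close> \<open>t \<le> \<xi> / 2\<close> by auto
  also have "\<bar>dm\<bar> * (p * (\<bar>\<xi>\<bar> / 2) powr (-p-1) * \<bar>t - \<xi>\<bar>) \<le> max \<bar>dp\<bar> \<bar>dm\<bar> * p * (\<bar>\<xi>\<bar> / 2) powr (-p-1) * \<bar>t - \<xi>\<bar>"
    using p by (simp add: mult.assoc mult_right_mono)
  finally show ?thesis .
qed

lemma near_weight_le:
  fixes a :: real
  assumes "0 \<le> a" and "1 \<le> n"
  shows "a / (1 + a) ^ (n + 2) \<le> 1 / (1 + a) ^ 2"
proof -
  have "a \<le> (1 + a) ^ n"
    using power_increasing[OF assms(2), of "1 + a"] assms(1) by simp
  have "a / (1 + a) ^ (n + 2) = a / (1 + a) ^ n / (1 + a) ^ 2"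
    by (simp only: power_add divide_divide_eq_left)
  also have "\<dots> \<le> 1 / (1 + a) ^ 2"
    using \<open>a \<le> (1 + a) ^ n\<close> assms(1) by (intro divide_right_mono) (simp_all add: pos_divide_le_eq)
  finally show ?thesis .
qed

lemma far_weight_le:
  fixes a X q :: real
  assumes "0 \<le> a" and "2 \<le> X" and "X / 2 \<le> a" and "q \<le> real n"
  shows "1 / (1 + a) ^ (n + 2) \<le> 2 ^ n * X powr (-q) / (1 + a) ^ 2"
proof -
  have "X powr q \<le> X powr real n"
    by (rule powr_mono) (use assms in auto)
  also have "\<dots> = 2 ^ n * (X / 2) ^ n"
    using assms(2) by (simp add: powr_realpow power_divide)
  also have "\<dots> \<le> 2 ^ n * (1 + a) ^ n"
    by (intro mult_left_mono power_mono) (use assms in auto)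
  finally have "1 / (1 + a) ^ n \<le> 2 ^ n / X powr q"
    using assms(1,2) by (simp add: field_simps)
  have "1 / (1 + a) ^ (n + 2) = 1 / (1 + a) ^ n / (1 + a) ^ 2"
    by (simp only: power_add divide_divide_eq_left)
  also have "\<dots> \<le> 2 ^ n / X powr q / (1 + a) ^ 2"
    by (rule divide_right_mono) (use \<open>1 / (1 + a) ^ n \<le> 2 ^ n / X powr q\<close> assms(1) in auto)
  also have "\<dots> = 2 ^ n * X powr (-q) / (1 + a) ^ 2"
    by (simp add: powr_minus divide_inverse)
  finally show ?thesis .
qed

text \<open>
  Near the diagonal (|xi - k| <= |xi|/2) the mean value theorem supplies the factor |xi - k|,
  which one power of the weight absorbs; away from it the weight alone is small.
\<close>
lemma symbol_difference_weighted_le: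
  assumes p: "0 < p" and n: "p + 1 \<le> real n" and \<xi>: "2 \<le> \<bar>\<xi>\<bar>"
  shows "\<bar>dcoef p dp dm k - delta_sym p dp dm \<xi>\<bar> / (1 + \<bar>\<xi> - real_of_int k\<bar>) ^ (n + 2)
     \<le> max \<bar>dp\<bar> \<bar>dm\<bar> * (p * 2 powr (p + 1) + 2 * 2 ^ n) * \<bar>\<xi>\<bar> powr (-p-1)
        / (1 + \<bar>\<xi> - real_of_int k\<bar>) ^ 2"
proof -
  define D where "D = max \<bar>dp\<bar> \<bar>dm\<bar>"
  define a where "a = \<bar>\<xi> - real_of_int k\<bar>"
  define d where "d = \<bar>dcoef p dp dm k - delta_sym p dp dm \<xi>\<bar>"
  have "0 \<le> a" "0 \<le> D" "1 \<le> n"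
    using n p by (simp_all add: a_def D_def)
  have "d / (1 + a) ^ (n + 2) \<le> D * (p * 2 powr (p + 1) + 2 * 2 ^ n) * \<bar>\<xi>\<bar> powr (-p-1) / (1 + a) ^ 2"
  proof (cases "a \<le> \<bar>\<xi>\<bar> / 2")
    case True
    have "(\<bar>\<xi>\<bar> / 2) powr (-p-1) = 2 powr (p + 1) * \<bar>\<xi>\<bar> powr (-p-1)"
      using powr_add[of 2 "p + 1" "-p-1"] by (simp add: powr_divide divide_simps)
    moreover have "\<xi> \<noteq> 0"
      using \<xi> by auto
    ultimately have "d \<le> D * p * 2 powr (p + 1) * \<bar>\<xi>\<bar> powr (-p-1) * a"
      using abs_delta_sym_diff_le[OF p, of \<xi> "real_of_int k" dp dm] True
      unfolding d_def dcoef_eq_delta_sym D_def a_def by (simp add: abs_minus_commute mult.assoc)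
    then have "d / (1 + a) ^ (n + 2) \<le> D * p * 2 powr (p + 1) * \<bar>\<xi>\<bar> powr (-p-1) * (a / (1 + a) ^ (n + 2))"
      using \<open>0 \<le> a\<close> by (simp add: divide_right_mono)
    also have "\<dots> \<le> D * p * 2 powr (p + 1) * \<bar>\<xi>\<bar> powr (-p-1) * (1 / (1 + a) ^ 2)"
      using p \<open>0 \<le> D\<close> by (intro mult_left_mono near_weight_le \<open>0 \<le> a\<close> \<open>1 \<le> n\<close>) auto
    also have "\<dots> \<le> D * (p * 2 powr (p + 1) + 2 * 2 ^ n) * \<bar>\<xi>\<bar> powr (-p-1) / (1 + a) ^ 2"
      using \<open>0 \<le> D\<close> \<open>0 \<le> a\<close> by (simp add: divide_right_mono mult_left_mono algebra_simps)
    finally show ?thesis .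
  next
    case False
    have "d \<le> \<bar>delta_sym p dp dm (real_of_int k)\<bar> + \<bar>delta_sym p dp dm \<xi>\<bar>"
      unfolding d_def dcoef_eq_delta_sym by linarith
    also have "\<dots> \<le> 2 * D"
      using abs_delta_sym_le[of p \<xi> dp dm] abs_dcoef_le[of p dp dm k] p \<xi>
      unfolding D_def dcoef_eq_delta_sym by simp
    finally have "d / (1 + a) ^ (n + 2) \<le> 2 * D * (1 / (1 + a) ^ (n + 2))"
      using \<open>0 \<le> a\<close> by (simp add: divide_right_mono)
    also have "\<dots> \<le> 2 * D * (2 ^ n * \<bar>\<xi>\<bar> powr (-p-1) / (1 + a) ^ 2)"
      using far_weight_le[of a "\<bar>\<xi>\<bar>" "p + 1" n] False \<xi> n \<open>0 \<le> D\<close> \<open>0 \<le> a\<close>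
      by (intro mult_left_mono) auto
    also have "\<dots> \<le> D * (p * 2 powr (p + 1) + 2 * 2 ^ n) * \<bar>\<xi>\<bar> powr (-p-1) / (1 + a) ^ 2"
      using \<open>0 \<le> D\<close> \<open>0 \<le> a\<close> p by (simp add: divide_right_mono mult_left_mono algebra_simps)
    finally show ?thesis .
  qed
  then show ?thesis
    unfolding d_def D_def a_def .
qed

section \<open>Decay of the Fourier transform of D1\<close>

lemma abs_powr_smallo_at_infinity:
  fixes a b :: real
  assumes "a < b"
  shows "(\<lambda>x::real. \<bar>x\<bar> powr a) \<in> o[at_infinity](\<lambda>x. \<bar>x\<bar> powr b)"
proof (rule smalloI_tendsto)
  have nonzero: "\<forall>\<^sub>F x::real in at_infinity. x \<noteq> 0"
    unfolding eventually_at_infinity by (intro exI[of _ 1]) auto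
  have "filterlim (\<lambda>x::real. norm x) at_top at_infinity"
    by (rule filterlim_at_infinity_imp_norm_at_top[OF filterlim_ident])
  then have "((\<lambda>x. \<bar>x\<bar> powr (a - b)) \<longlongrightarrow> 0) at_infinity"
    using assms by (intro tendsto_neg_powr) auto
  moreover have "\<forall>\<^sub>F x in at_infinity. \<bar>x\<bar> powr (a - b) = \<bar>x\<bar> powr a / \<bar>x\<bar> powr b"
    using nonzero by eventually_elim (simp add: powr_diff)
  ultimately show "((\<lambda>x. \<bar>x\<bar> powr a / \<bar>x\<bar> powr b) \<longlongrightarrow> 0) at_infinity"
    by (rule Lim_transform_eventually)
  show "\<forall>\<^sub>F x in at_infinity. \<bar>x\<bar> powr b \<noteq> 0"
    using nonzero by eventually_elim simp
qed

context poisson_bump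
begin

text \<open>Poisson summation allows subtracting the constant delta(xi) from every coefficient.\<close>
lemma D1_hat_eq_infsum:
  assumes "0 \<le> p" and "\<zeta> \<xi> = 1"
  shows "D1_hat p dp dm h \<zeta> \<xi> = (\<Sum>\<^sub>\<infinity>k::int.
    complex_of_real (dcoef p dp dm k - delta_sym p dp dm \<xi>) * fourier h (\<xi> - real_of_int k))"
proof -
  define f where "f k = complex_of_real (dcoef p dp dm k) * fourier h (\<xi> - real_of_int k)" for k
  define g where "g k = complex_of_real (delta_sym p dp dm \<xi>) * fourier h (\<xi> - real_of_int k)" for k
  have H: "(\<lambda>k. fourier h (\<xi> - real_of_int k)) summable_on UNIV"
    using summable_on_norm_fourier_shift by (simp add: summable_on_iff_abs_summable_on_complex)
  have "(\<lambda>k. norm (f k)) summable_on UNIV"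
  proof (rule Infinite_Sum.abs_summable_on_comparison_test'[OF summable_on_cmult_right[OF
        summable_on_norm_fourier_shift, of "max \<bar>dp\<bar> \<bar>dm\<bar>"]])
    show "norm (f k) \<le> max \<bar>dp\<bar> \<bar>dm\<bar> * norm (fourier h (\<xi> - real_of_int k))" for k
      unfolding f_def norm_mult norm_of_real
      by (rule mult_right_mono[OF abs_dcoef_le[OF assms(1)] norm_ge_zero])
  qed
  then have "f summable_on UNIV"
    by (simp add: summable_on_iff_abs_summable_on_complex)
  moreover have "(\<lambda>k. - g k) summable_on UNIV"
    unfolding summable_on_uminus g_def by (rule summable_on_cmult_right[OF H])
  ultimately have "(\<Sum>\<^sub>\<infinity>k. f k + - g k) = (\<Sum>\<^sub>\<infinity>k. f k) + (\<Sum>\<^sub>\<infinity>k. - g k)"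
    by (rule infsum_add)
  also have "\<dots> = (\<Sum>\<^sub>\<infinity>k. f k) - (\<Sum>\<^sub>\<infinity>k. g k)"
    by (simp add: infsum_uminus)
  also have "(\<Sum>\<^sub>\<infinity>k. g k) = complex_of_real (delta_sym p dp dm \<xi>)"
    unfolding g_def using H by (simp add: infsum_cmult_right poisson_summation)
  finally show ?thesis
    unfolding D1_hat_def f_def g_def using assms(2) by (simp add: algebra_simps)
qed

lemma norm_D1_hat_le:
  fixes p dp dm C :: real
  assumes p: "0 < p" and n: "p + 1 \<le> real n"
    and C: "\<And>\<eta>. norm (fourier h \<eta>) \<le> C / (1 + \<bar>\<eta>\<bar>) ^ (n + 2)"
    and "\<zeta> \<xi> = 1" and \<xi>: "2 \<le> \<bar>\<xi>\<bar>"
  defines "K \<equiv> C * max \<bar>dp\<bar> \<bar>dm\<bar> * (p * 2 powr (p + 1) + 2 * 2 ^ n)"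
  shows "norm (D1_hat p dp dm h \<zeta> \<xi>)
    \<le> 4 * (\<Sum>\<^sub>\<infinity>k::int. 1 / (1 + \<bar>real_of_int k\<bar>) ^ 2) * K * \<bar>\<xi>\<bar> powr (-p-1)"
proof -
  define t where "t k = complex_of_real (dcoef p dp dm k - delta_sym p dp dm \<xi>) * fourier h (\<xi> - real_of_int k)" for k
  define W where "W k = 1 / (1 + \<bar>\<xi> - real_of_int k\<bar>) ^ 2" for k
  have "0 \<le> C"
    using C[of 0] norm_ge_zero[of "fourier h 0"] by (simp del: norm_ge_zero)
  then have "0 \<le> K"
    using p unfolding K_def by (intro mult_nonneg_nonneg) auto
  have W: "W summable_on UNIV"
    unfolding W_def by (rule summable_on_inverse_square_shift)
  have t: "norm (t k) \<le> K * \<bar>\<xi>\<bar> powr (-p-1) * W k" for k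
  proof -
    have "norm (t k) \<le> \<bar>dcoef p dp dm k - delta_sym p dp dm \<xi>\<bar> * (C / (1 + \<bar>\<xi> - real_of_int k\<bar>) ^ (n + 2))"
      unfolding t_def norm_mult norm_of_real by (intro mult_left_mono C) simp
    also have "\<dots> = C * (\<bar>dcoef p dp dm k - delta_sym p dp dm \<xi>\<bar> / (1 + \<bar>\<xi> - real_of_int k\<bar>) ^ (n + 2))"
      by simp
    also have "\<dots> \<le> K * \<bar>\<xi>\<bar> powr (-p-1) * W k"
      using mult_left_mono[OF symbol_difference_weighted_le[OF p n \<xi>, of dp dm k] \<open>0 \<le> C\<close>]
      by (simp add: K_def W_def)
    finally show ?thesis .
  qed
  have KW: "(\<lambda>k. K * \<bar>\<xi>\<bar> powr (-p-1) * W k) summable_on UNIV"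
    by (rule summable_on_cmult_right[OF W])
  have t_summable: "(\<lambda>k. norm (t k)) summable_on UNIV"
    by (rule Infinite_Sum.abs_summable_on_comparison_test'[OF KW t])
  have "norm (D1_hat p dp dm h \<zeta> \<xi>) = norm (\<Sum>\<^sub>\<infinity>k. t k)"
    using D1_hat_eq_infsum[of p \<zeta> \<xi>] p \<open>\<zeta> \<xi> = 1\<close> by (simp add: t_def)
  also have "\<dots> \<le> (\<Sum>\<^sub>\<infinity>k. norm (t k))"
    by (rule norm_infsum_bound) (use t_summable in simp)
  also have "\<dots> \<le> (\<Sum>\<^sub>\<infinity>k. K * \<bar>\<xi>\<bar> powr (-p-1) * W k)"
    by (rule infsum_mono[OF t_summable KW t])
  also have "\<dots> = K * \<bar>\<xi>\<bar> powr (-p-1) * (\<Sum>\<^sub>\<infinity>k. W k)"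
    by (rule infsum_cmult_right) (use W in simp)
  also have "\<dots> \<le> K * \<bar>\<xi>\<bar> powr (-p-1) * (4 * (\<Sum>\<^sub>\<infinity>k::int. 1 / (1 + \<bar>real_of_int k\<bar>) ^ 2))"
    unfolding W_def using \<open>0 \<le> K\<close> by (intro mult_left_mono infsum_inverse_square_shift_le) auto
  finally show ?thesis
    by (simp add: algebra_simps)
qed

lemma D1_hat_bigo:
  assumes p: "0 < p" and \<zeta>: "\<forall>\<^sub>F \<xi> in at_infinity. \<zeta> \<xi> = 1"
  shows "(\<lambda>\<xi>. norm (D1_hat p dp dm h \<zeta> \<xi>)) \<in> O[at_infinity](\<lambda>\<xi>. \<bar>\<xi>\<bar> powr (-p-1))"
proof -
  define n where "n = nat \<lceil>p\<rceil> + 1"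
  have n: "p + 1 \<le> real n"
    unfolding n_def using of_nat_ceiling[of p] by simp
  obtain C where C: "\<And>\<eta>. norm (fourier h \<eta>) \<le> C / (1 + \<bar>\<eta>\<bar>) ^ (n + 2)"
    using fourier_decay by blast
  have "\<forall>\<^sub>F \<xi>::real in at_infinity. 2 \<le> \<bar>\<xi>\<bar>"
    unfolding eventually_at_infinity by (intro exI[of _ 2]) auto
  with \<zeta> have "\<forall>\<^sub>F \<xi> in at_infinity. norm (norm (D1_hat p dp dm h \<zeta> \<xi>))
      \<le> (4 * (\<Sum>\<^sub>\<infinity>k::int. 1 / (1 + \<bar>real_of_int k\<bar>) ^ 2)
          * (C * max \<bar>dp\<bar> \<bar>dm\<bar> * (p * 2 powr (p + 1) + 2 * 2 ^ n))) * norm (\<bar>\<xi>\<bar> powr (-p-1))"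
    by eventually_elim (simp add: norm_D1_hat_le[OF p n C])
  then show ?thesis
    by (rule bigoI)
qed

end

theorem mainTheorem3:
  fixes p dp dm :: real and h0 \<zeta> :: "real \<Rightarrow> real"
  assumes "p > 1/2"
    and "smooth h0"
    and "\<forall>x. -pi \<le> x \<and> x \<le> pi \<longrightarrow> h0 x = 1"
    and "\<forall>x. \<bar>x\<bar> > 3 * pi / 2 \<longrightarrow> h0 x = 0"
    and "smooth \<zeta>"
    and "\<exists>\<epsilon>>0. \<forall>x. \<bar>x\<bar> < \<epsilon> \<longrightarrow> \<zeta> x = 0"
    and "\<exists>R. \<forall>x. \<bar>x\<bar> > R \<longrightarrow> \<zeta> x = 1"
  shows "(\<lambda>\<xi>. norm (D1_hat p dp dm h0 \<zeta> \<xi>)) \<in> o[at_infinity](\<lambda>\<xi>. \<bar>\<xi>\<bar> powr (- p))"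
proof -
  interpret poisson_bump h0 "3 * pi / 2"
    by unfold_locales (use assms(2-4) in auto)
  obtain R where "\<And>x. \<bar>x\<bar> > R \<Longrightarrow> \<zeta> x = 1"
    using assms(7) by blast
  then have "\<forall>\<^sub>F \<xi> in at_infinity. \<zeta> \<xi> = 1"
    unfolding eventually_at_infinity by (intro exI[of _ "R + 1"]) auto
  then have "(\<lambda>\<xi>. norm (D1_hat p dp dm h0 \<zeta> \<xi>)) \<in> O[at_infinity](\<lambda>\<xi>. \<bar>\<xi>\<bar> powr (-p-1))"
    using assms(1) by (intro D1_hat_bigo) auto
  moreover have "(\<lambda>\<xi>::real. \<bar>\<xi>\<bar> powr (-p-1)) \<in> o[at_infinity](\<lambda>\<xi>. \<bar>\<xi>\<bar> powr (- p))"
    by (rule abs_powr_smallo_at_infinity) simp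
  ultimately show ?thesis
    by (rule landau_o.big_small_trans)
qed

end
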